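(* For all $A,B\subseteq[n]$ the operators $\Gamma_A$ satisfy $$\{\Gamma_A,\Gamma_B\}=\Gamma_{(A\cup B)\setminus(A\cap B)}+2\,\Gamma_{A\cap B}\Gamma_{A\cup B}+2\,\Gamma_{A\setminus(A\cap B)}\Gamma_{B\setminus(A\cap B)},$$ where $\{X,Y\}=XY+YX$. (Here $\Gamma_\emptyset=-\tfrac12$ and $\Gamma_{\{k\}}=\mu_k$ are scalars.)
   Context: Fix $n\ge1$ and real parameters $\mu_1,\dots,\mu_n>0$; write $[n]=\{1,\dots,n\}$. For $i\in[n]$, $r_i$ is the reflection $(r_if)(x)=f(x_1,\dots,-x_i,\dots,x_n)$ and $T_i=\partial_{x_i}+\frac{\mu_i}{x_i}(1-r_i)$. $\mathcal{C}\ell_n$ is generated by $e_1,\dots,e_n$ with $e_ie_j+e_je_i=-2\delta_{ij}$, $V$ is a fixed left $\mathcal{C}\ell_n$-module, and operators act on $\mathcal{P}(\mathbb{R}^n)\otimes V$ with $x_i,T_i,r_i$ acting on the polynomial factor and $e_i$ on $V$. For $A\subseteq[n]$: $\underline{D}_A=\sum_{i\in A}e_iT_i$, $\underline{x}_A=\sum_{i\in A}e_ix_i$, $\underline{S}_A=\frac12([\underline{x}_A,\underline{D}_A]-1)$, $\Gamma_A=\underline{S}_A\prod_{i\in A}r_i$ (empty sums $0$, empty products $1$). *)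

theory Defs
  imports Main "HOL.Real_Vector_Spaces"
begin

text \<open>
Elements of P(R^n) (x) V are represented by their coefficient functions:
a function F :: (nat => nat) => 'v assigns to each exponent vector alpha
(alpha i = exponent of x_i) the V-coefficient of the monomial x^alpha.
Variables are indexed by [n] = {1..n}.
\<close>

type_synonym 'v pv = "(nat \<Rightarrow> nat) \<Rightarrow> 'v"

definition is_poly :: "nat \<Rightarrow> 'v::zero pv \<Rightarrow> bool" where
  "is_poly n F \<longleftrightarrow> finite {\<alpha>. F \<alpha> \<noteq> 0} \<and>
     (\<forall>\<alpha>. F \<alpha> \<noteq> 0 \<longrightarrow> (\<forall>i. i \<notin> {1..n} \<longrightarrow> \<alpha> i = 0))"

definition mulx :: "nat \<Rightarrow> 'v::real_vector pv \<Rightarrow> 'v pv" where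
  "mulx i F = (\<lambda>\<alpha>. if \<alpha> i = 0 then 0 else F (\<alpha>(i := \<alpha> i - 1)))"

definition pdx :: "nat \<Rightarrow> 'v::real_vector pv \<Rightarrow> 'v pv" where
  "pdx i F = (\<lambda>\<alpha>. real (\<alpha> i + 1) *\<^sub>R F (\<alpha>(i := \<alpha> i + 1)))"

text \<open>division by x_i (exact on polynomials divisible by x_i)\<close>
definition divx :: "nat \<Rightarrow> 'v::real_vector pv \<Rightarrow> 'v pv" where
  "divx i F = (\<lambda>\<alpha>. F (\<alpha>(i := \<alpha> i + 1)))"

definition refl :: "nat \<Rightarrow> 'v::real_vector pv \<Rightarrow> 'v pv" where
  "refl i F = (\<lambda>\<alpha>. ((-1::real) ^ (\<alpha> i)) *\<^sub>R F \<alpha>)"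

definition refl_set :: "nat set \<Rightarrow> 'v::real_vector pv \<Rightarrow> 'v pv" where
  "refl_set A F = (\<lambda>\<alpha>. (\<Prod>i\<in>A. (-1::real) ^ (\<alpha> i)) *\<^sub>R F \<alpha>)"

definition dunkl :: "(nat \<Rightarrow> real) \<Rightarrow> nat \<Rightarrow> 'v::real_vector pv \<Rightarrow> 'v pv" where
  "dunkl \<mu> i F = (\<lambda>\<alpha>. pdx i F \<alpha> + \<mu> i *\<^sub>R divx i (\<lambda>\<beta>. F \<beta> - refl i F \<beta>) \<alpha>)"

definition DA :: "(nat \<Rightarrow> real) \<Rightarrow> (nat \<Rightarrow> 'v \<Rightarrow> 'v) \<Rightarrow> nat set \<Rightarrow> 'v::real_vector pv \<Rightarrow> 'v pv" where
  "DA \<mu> e A F = (\<lambda>\<alpha>. \<Sum>i\<in>A. e i (dunkl \<mu> i F \<alpha>))"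

definition XA :: "(nat \<Rightarrow> 'v \<Rightarrow> 'v) \<Rightarrow> nat set \<Rightarrow> 'v::real_vector pv \<Rightarrow> 'v pv" where
  "XA e A F = (\<lambda>\<alpha>. \<Sum>i\<in>A. e i (mulx i F \<alpha>))"

definition SA :: "(nat \<Rightarrow> real) \<Rightarrow> (nat \<Rightarrow> 'v \<Rightarrow> 'v) \<Rightarrow> nat set \<Rightarrow> 'v::real_vector pv \<Rightarrow> 'v pv" where
  "SA \<mu> e A F = (\<lambda>\<alpha>. (1/2::real) *\<^sub>R
      (XA e A (DA \<mu> e A F) \<alpha> - DA \<mu> e A (XA e A F) \<alpha> - F \<alpha>))"

definition Gamma :: "(nat \<Rightarrow> real) \<Rightarrow> (nat \<Rightarrow> 'v \<Rightarrow> 'v) \<Rightarrow> nat set \<Rightarrow> 'v::real_vector pv \<Rightarrow> 'v pv" where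
  "Gamma \<mu> e A F = SA \<mu> e A (refl_set A F)"

end

theory Submission
  imports Defs
begin

text \<open>
The operators \<open>x\<^sub>i\<close>, \<open>T\<^sub>i\<close>, \<open>r\<^sub>i\<close> and \<open>e\<^sub>i\<close> are placed in one associative real algebra of
linear operators, where everything follows from their commutation relations, above all Dunkl's
\<open>T\<^sub>i x\<^sub>i - x\<^sub>i T\<^sub>i = 1 + 2 \<mu>\<^sub>i r\<^sub>i\<close>. It makes \<open>S\<^sub>U\<close> anticommute with \<open>x\<^sub>U\<close> and \<open>D\<^sub>U\<close>, and for disjoint
\<open>U\<close>, \<open>V\<close> one has \<open>S(U \<union> V) = S\<^sub>U + S\<^sub>V + 1/2 + (x\<^sub>U D\<^sub>V + x\<^sub>V D\<^sub>U)\<close>. Splitting \<open>A\<close> and \<open>B\<close> into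
\<open>A - B\<close>, \<open>A \<inter> B\<close>, \<open>B - A\<close>, every \<open>\<Gamma>\<close> in the identity becomes an expression in three \<open>S\<close>'s,
three cross terms and three reflection products, and the identity is forced by their mutual
(anti)commutation together with one anticommutator between cross terms.
\<close>

section \<open>Commuting and anticommuting elements of a ring\<close>

definition commute :: "'a::ring \<Rightarrow> 'a \<Rightarrow> bool" where
  "commute a b \<longleftrightarrow> a * b = b * a"

definition anticommute :: "'a::ring \<Rightarrow> 'a \<Rightarrow> bool" where
  "anticommute a b \<longleftrightarrow> a * b = - (b * a)"

lemma commute_sym: "commute a b \<Longrightarrow> commute b a"
  by (simp add: commute_def)

lemma anticommute_sym: "anticommute a b \<Longrightarrow> anticommute b a"
  by (simp add: anticommute_def)

lemma commute_mult_left: "commute a b \<Longrightarrow> a * (b * z) = b * (a * z)"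
  by (simp add: commute_def flip: mult.assoc)

lemma anticommute_mult_left: "anticommute a b \<Longrightarrow> a * (b * z) = - (b * (a * z))"
  by (simp add: anticommute_def flip: mult.assoc)

lemma commute_mult: "commute a b \<Longrightarrow> commute a c \<Longrightarrow> commute a (b * c)"
  by (simp add: commute_def) (metis mult.assoc)

lemma anticommute_mult_commute: "anticommute a b \<Longrightarrow> commute a c \<Longrightarrow> anticommute a (b * c)"
  by (simp add: commute_def anticommute_def) (metis mult.assoc mult_minus_left mult_minus_right minus_minus)

lemma commute_mult_anticommute: "commute a b \<Longrightarrow> anticommute a c \<Longrightarrow> anticommute a (b * c)"
  by (simp add: commute_def anticommute_def) (metis mult.assoc mult_minus_left mult_minus_right minus_minus)

lemma anticommute_mult_anticommute: "anticommute a b \<Longrightarrow> anticommute a c \<Longrightarrow> commute a (b * c)"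
  by (simp add: commute_def anticommute_def) (metis mult.assoc mult_minus_left mult_minus_right minus_minus)

lemma commute_add: "commute a b \<Longrightarrow> commute a c \<Longrightarrow> commute a (b + c)"
  by (simp add: commute_def algebra_simps)

lemma anticommute_add: "anticommute a b \<Longrightarrow> anticommute a c \<Longrightarrow> anticommute a (b + c)"
  by (simp add: anticommute_def algebra_simps)

lemma commute_diff: "commute a b \<Longrightarrow> commute a c \<Longrightarrow> commute a (b - c)"
  by (simp add: commute_def algebra_simps)

lemma commute_scaleR: "commute a b \<Longrightarrow> commute (a :: 'a::real_algebra) (r *\<^sub>R b)"
  by (simp add: commute_def)

lemma commute_one: "commute (a :: 'a::{ring, monoid_mult}) 1"
  by (simp add: commute_def)

lemma commute_sum: "(\<And>i. i \<in> U \<Longrightarrow> commute a (f i)) \<Longrightarrow> commute a (sum f U)"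
  by (induction U rule: infinite_finite_induct) (auto simp: commute_def algebra_simps)

lemma anticommute_sum: "(\<And>i. i \<in> U \<Longrightarrow> anticommute a (f i)) \<Longrightarrow> anticommute a (sum f U)"
  by (induction U rule: infinite_finite_induct) (auto simp: anticommute_def algebra_simps)

lemma anticommute_sum_sum:
  "(\<And>i j. i \<in> U \<Longrightarrow> j \<in> V \<Longrightarrow> anticommute (f i) (g j)) \<Longrightarrow> anticommute (sum f U) (sum g V)"
  by (metis anticommute_sum anticommute_sym)

lemma commutator_square: "a * a * b - b * (a * a) = a * (a * b - b * a) + (a * b - b * a) * (a :: 'a::ring)"
  by (simp add: algebra_simps)

section \<open>Linear operators on coefficient functions\<close>

text \<open>Composition distributes over sums only for linear operators, hence the subtype.\<close>

definition linear_pv :: "('v::real_vector pv \<Rightarrow> 'v pv) \<Rightarrow> bool" where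
  "linear_pv f \<longleftrightarrow> (\<forall>F G. f (\<lambda>\<alpha>. F \<alpha> + G \<alpha>) = (\<lambda>\<alpha>. f F \<alpha> + f G \<alpha>)) \<and>
                  (\<forall>c F. f (\<lambda>\<alpha>. c *\<^sub>R F \<alpha>) = (\<lambda>\<alpha>. c *\<^sub>R f F \<alpha>))"

typedef (overloaded) 'v pv_op = "{f :: 'v::real_vector pv \<Rightarrow> 'v pv. linear_pv f}"
  morphisms app Op
  by (rule exI[of _ "\<lambda>F. F"]) (simp add: linear_pv_def)

lemma app_add: "app a (\<lambda>\<alpha>. F \<alpha> + G \<alpha>) = (\<lambda>\<alpha>. app a F \<alpha> + app a G \<alpha>)"
  using app[of a] by (simp add: linear_pv_def)

lemma app_scaleR: "app a (\<lambda>\<alpha>. c *\<^sub>R F \<alpha>) = (\<lambda>\<alpha>. c *\<^sub>R app a F \<alpha>)"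
  using app[of a] by (simp add: linear_pv_def)

lemma app_Op: "linear_pv f \<Longrightarrow> app (Op f) = f"
  by (simp add: Op_inverse)

lemma pv_op_eqI: "(\<And>F \<alpha>. app a F \<alpha> = app b F \<alpha>) \<Longrightarrow> a = b"
  by (metis app_inject ext)

instantiation pv_op :: (real_vector) "{real_algebra, monoid_mult}"
begin

definition "0 = Op (\<lambda>F \<alpha>. 0)"
definition "1 = Op (\<lambda>F. F)"
definition "a + b = Op (\<lambda>F \<alpha>. app a F \<alpha> + app b F \<alpha>)"
definition "- a = Op (\<lambda>F \<alpha>. - app a F \<alpha>)"
definition "a - b = Op (\<lambda>F \<alpha>. app a F \<alpha> - app b F \<alpha>)"
definition "c *\<^sub>R a = Op (\<lambda>F \<alpha>. c *\<^sub>R app a F \<alpha>)"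
definition "a * b = Op (\<lambda>F. app a (app b F))"

lemma app_zero: "app 0 F = (\<lambda>\<alpha>. 0)"
  by (simp add: zero_pv_op_def app_Op linear_pv_def)

lemma app_one: "app 1 F = F"
  by (simp add: one_pv_op_def app_Op linear_pv_def)

lemma app_plus: "app (a + b) F = (\<lambda>\<alpha>. app a F \<alpha> + app b F \<alpha>)"
  by (simp add: plus_pv_op_def app_Op linear_pv_def app_add app_scaleR fun_eq_iff scaleR_add_right)

lemma app_uminus: "app (- a) F = (\<lambda>\<alpha>. - app a F \<alpha>)"
  by (simp add: uminus_pv_op_def app_Op linear_pv_def app_add app_scaleR fun_eq_iff)

lemma app_minus: "app (a - b) F = (\<lambda>\<alpha>. app a F \<alpha> - app b F \<alpha>)"
  by (simp add: minus_pv_op_def app_Op linear_pv_def app_add app_scaleR fun_eq_iff scaleR_diff_right)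

lemma app_scaleR_op: "app (c *\<^sub>R a) F = (\<lambda>\<alpha>. c *\<^sub>R app a F \<alpha>)"
  by (simp add: scaleR_pv_op_def app_Op linear_pv_def app_add app_scaleR fun_eq_iff scaleR_add_right)

lemma app_times: "app (a * b) F = app a (app b F)"
  by (simp add: times_pv_op_def app_Op linear_pv_def app_add app_scaleR)

instance
  by standard (rule pv_op_eqI; simp add: app_zero app_one app_plus app_uminus app_minus app_scaleR_op
      app_times app_add app_scaleR algebra_simps scaleR_add_right scaleR_add_left)+

end

lemma app_sum: "finite U \<Longrightarrow> app (sum f U) F \<alpha> = (\<Sum>i\<in>U. app (f i) F \<alpha>)"
  by (induction U rule: finite_induct) (simp_all add: app_zero app_plus)

lemmas app_simps = app_zero app_one app_plus app_uminus app_minus app_scaleR_op app_times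

definition mulx_op :: "nat \<Rightarrow> 'v::real_vector pv_op" where
  "mulx_op i = Op (mulx i)"

definition refl_op :: "nat \<Rightarrow> 'v::real_vector pv_op" where
  "refl_op i = Op (refl i)"

definition refl_set_op :: "nat set \<Rightarrow> 'v::real_vector pv_op" where
  "refl_set_op U = Op (refl_set U)"

definition dunkl_op :: "(nat \<Rightarrow> real) \<Rightarrow> nat \<Rightarrow> 'v::real_vector pv_op" where
  "dunkl_op \<mu> i = Op (dunkl \<mu> i)"

definition coef_op :: "('v::real_vector \<Rightarrow> 'v) \<Rightarrow> 'v pv_op" where
  "coef_op h = Op (\<lambda>F \<alpha>. h (F \<alpha>))"

lemma dunkl_eq: "dunkl \<mu> i F \<alpha> = (real (\<alpha> i + 1) + \<mu> i * (1 + (-1) ^ \<alpha> i)) *\<^sub>R F (\<alpha>(i := \<alpha> i + 1))"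
  by (simp add: dunkl_def pdx_def divx_def refl_def algebra_simps)

lemma app_mulx_op: "app (mulx_op i) = mulx i"
  by (simp add: mulx_op_def app_Op linear_pv_def mulx_def fun_eq_iff)

lemma app_refl_op: "app (refl_op i) = refl i"
  by (simp add: refl_op_def app_Op linear_pv_def refl_def fun_eq_iff algebra_simps)

lemma app_refl_set_op: "app (refl_set_op U) = refl_set U"
  by (simp add: refl_set_op_def app_Op linear_pv_def refl_set_def fun_eq_iff algebra_simps)

lemma app_dunkl_op: "app (dunkl_op \<mu> i) = dunkl \<mu> i"
  by (simp add: dunkl_op_def app_Op linear_pv_def dunkl_eq fun_eq_iff algebra_simps)

lemma app_coef_op: "linear h \<Longrightarrow> app (coef_op h) F = (\<lambda>\<alpha>. h (F \<alpha>))"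
  by (simp add: coef_op_def app_Op linear_pv_def linear_add linear_scale)

lemmas app_ops = app_simps app_mulx_op app_refl_op app_refl_set_op app_dunkl_op

lemma mulx_op_commute: "mulx_op i * mulx_op j = mulx_op j * mulx_op i"
  by (rule pv_op_eqI) (auto simp: app_ops mulx_def fun_upd_twist)

lemma dunkl_op_commute: "dunkl_op \<mu> i * dunkl_op \<mu> j = dunkl_op \<mu> j * dunkl_op \<mu> i"
  by (cases "i = j", simp, rule pv_op_eqI) (simp add: app_ops dunkl_eq fun_upd_twist)

lemma dunkl_mulx_op_commute: "i \<noteq> j \<Longrightarrow> dunkl_op \<mu> i * mulx_op j = mulx_op j * dunkl_op \<mu> i"
  by (rule pv_op_eqI) (auto simp: app_ops dunkl_eq mulx_def fun_upd_twist)

lemma refl_mulx_op_anticommute: "refl_op i * mulx_op i = - (mulx_op i * refl_op i)"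
proof (rule pv_op_eqI)
  fix F \<alpha>
  show "app (refl_op i * mulx_op i) F \<alpha> = app (- (mulx_op i * refl_op i)) F \<alpha>"
    by (cases "\<alpha> i") (simp_all add: app_ops refl_def mulx_def)
qed

lemma refl_dunkl_op_anticommute: "refl_op i * dunkl_op \<mu> i = - (dunkl_op \<mu> i * refl_op i)"
  by (rule pv_op_eqI) (simp add: app_ops refl_def dunkl_eq)

lemma dunkl_mulx_op_commutator:
  "dunkl_op \<mu> i * mulx_op i - mulx_op i * dunkl_op \<mu> i = 1 + (2 * \<mu> i) *\<^sub>R refl_op i"
proof (rule pv_op_eqI)
  fix F \<alpha>
  have "app (dunkl_op \<mu> i * mulx_op i - mulx_op i * dunkl_op \<mu> i) F \<alpha>
      = (1 + 2 * \<mu> i * (-1) ^ \<alpha> i) *\<^sub>R F \<alpha>"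
  proof (cases "\<alpha> i")
    case 0
    then show ?thesis by (simp add: app_ops dunkl_eq mulx_def algebra_simps flip: scaleR_add_left)
  next
    case (Suc k)
    then have "(\<alpha>(i := k))(i := Suc k) = \<alpha>" by auto
    have "real (\<alpha> i + 1) + \<mu> i * (1 + (-1) ^ \<alpha> i) - (real (k + 1) + \<mu> i * (1 + (-1) ^ k))
        = 1 + 2 * \<mu> i * (-1) ^ \<alpha> i"
      using Suc by (simp add: algebra_simps)
    with Suc \<open>(\<alpha>(i := k))(i := Suc k) = \<alpha>\<close> show ?thesis
      by (simp add: app_ops dunkl_eq mulx_def flip: scaleR_diff_left)
  qed
  then show "app (dunkl_op \<mu> i * mulx_op i - mulx_op i * dunkl_op \<mu> i) F \<alpha>
      = app (1 + (2 * \<mu> i) *\<^sub>R refl_op i) F \<alpha>"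
    by (simp add: app_ops refl_def scaleR_add_left)
qed

lemma refl_set_op_insert:
  "finite U \<Longrightarrow> i \<notin> U \<Longrightarrow> refl_set_op (insert i U) = refl_op i * refl_set_op U"
  by (rule pv_op_eqI) (simp add: app_ops refl_set_def refl_def)

lemma refl_set_op_union:
  "finite U \<Longrightarrow> finite V \<Longrightarrow> U \<inter> V = {} \<Longrightarrow> refl_set_op (U \<union> V) = refl_set_op U * refl_set_op V"
  by (rule pv_op_eqI) (simp add: app_ops refl_set_def prod.union_disjoint)

lemma refl_set_op_commute: "refl_set_op U * refl_set_op V = refl_set_op V * refl_set_op U"
  by (rule pv_op_eqI) (simp add: app_ops refl_set_def)

lemma refl_set_op_square: "refl_set_op U * refl_set_op U = 1"
  by (rule pv_op_eqI) (simp add: app_ops refl_set_def flip: prod.distrib power_mult_distrib)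

lemma refl_set_mulx_op_commute: "j \<notin> U \<Longrightarrow> refl_set_op U * mulx_op j = mulx_op j * refl_set_op U"
  by (rule pv_op_eqI) (auto simp: app_ops refl_set_def mulx_def intro!: prod.cong)

lemma refl_set_dunkl_op_commute:
  "j \<notin> U \<Longrightarrow> refl_set_op U * dunkl_op \<mu> j = dunkl_op \<mu> j * refl_set_op U"
  by (rule pv_op_eqI) (auto simp: app_ops refl_set_def dunkl_eq intro!: prod.cong)

lemma coef_mulx_op_commute: "linear h \<Longrightarrow> coef_op h * mulx_op i = mulx_op i * coef_op h"
  by (rule pv_op_eqI) (simp add: app_ops app_coef_op mulx_def linear_0)

lemma coef_dunkl_op_commute: "linear h \<Longrightarrow> coef_op h * dunkl_op \<mu> i = dunkl_op \<mu> i * coef_op h"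
  by (rule pv_op_eqI) (simp add: app_ops app_coef_op dunkl_eq linear_scale)

lemma coef_refl_set_op_commute: "linear h \<Longrightarrow> coef_op h * refl_set_op U = refl_set_op U * coef_op h"
  by (rule pv_op_eqI) (simp add: app_ops app_coef_op refl_set_def linear_scale)

lemma coef_op_anticommutator:
  "linear h \<Longrightarrow> linear g \<Longrightarrow> (\<And>v. h (g v) + g (h v) = c *\<^sub>R v) \<Longrightarrow>
   coef_op h * coef_op g + coef_op g * coef_op h = c *\<^sub>R 1"
  by (rule pv_op_eqI) (simp add: app_ops app_coef_op)

lemma refl_set_mulx_op_anticommute:
  assumes "finite W" and "j \<in> W"
  shows "anticommute (refl_set_op W) (mulx_op j)"
proof -
  have "refl_set_op W = refl_op j * refl_set_op (W - {j})"
    using assms refl_set_op_insert[of "W - {j}" j] by (simp add: insert_absorb)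
  moreover have "anticommute (mulx_op j) (refl_op j * refl_set_op (W - {j}))"
    by (intro anticommute_mult_commute)
       (simp_all add: anticommute_def commute_def refl_mulx_op_anticommute refl_set_mulx_op_commute)
  ultimately show ?thesis by (metis anticommute_sym)
qed

lemma refl_set_dunkl_op_anticommute:
  assumes "finite W" and "j \<in> W"
  shows "anticommute (refl_set_op W) (dunkl_op \<mu> j)"
proof -
  have "refl_set_op W = refl_op j * refl_set_op (W - {j})"
    using assms refl_set_op_insert[of "W - {j}" j] by (simp add: insert_absorb)
  moreover have "anticommute (dunkl_op \<mu> j) (refl_op j * refl_set_op (W - {j}))"
    by (intro anticommute_mult_commute)
       (simp_all add: anticommute_def commute_def refl_dunkl_op_anticommute refl_set_dunkl_op_commute)
  ultimately show ?thesis by (metis anticommute_sym)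
qed

lemma mulx_square_dunkl_op_commutator:
  "mulx_op i * mulx_op i * dunkl_op \<mu> j - dunkl_op \<mu> j * (mulx_op i * mulx_op i)
   = (if i = j then (-2) *\<^sub>R mulx_op j else 0)"
proof (cases "i = j")
  case True
  let ?C = "1 + (2 * \<mu> i) *\<^sub>R refl_op i"
  have "mulx_op i * mulx_op i * dunkl_op \<mu> i - dunkl_op \<mu> i * (mulx_op i * mulx_op i)
      = - (mulx_op i * ?C + ?C * mulx_op i)"
    unfolding commutator_square dunkl_mulx_op_commutator [symmetric] by (simp add: algebra_simps)
  also have "\<dots> = (-2) *\<^sub>R mulx_op i - (2 * \<mu> i) *\<^sub>R (mulx_op i * refl_op i + refl_op i * mulx_op i)"
    by (simp add: algebra_simps scaleR_2)
  also have "\<dots> = (-2) *\<^sub>R mulx_op i"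
    by (simp add: refl_mulx_op_anticommute)
  finally show ?thesis using True by simp
next
  case False
  then show ?thesis
    by (simp add: commutator_square dunkl_mulx_op_commute)
qed

lemma dunkl_square_mulx_op_commutator:
  "dunkl_op \<mu> i * dunkl_op \<mu> i * mulx_op j - mulx_op j * (dunkl_op \<mu> i * dunkl_op \<mu> i)
   = (if i = j then 2 *\<^sub>R dunkl_op \<mu> j else 0)"
proof (cases "i = j")
  case True
  let ?C = "1 + (2 * \<mu> i) *\<^sub>R refl_op i"
  have "dunkl_op \<mu> i * dunkl_op \<mu> i * mulx_op i - mulx_op i * (dunkl_op \<mu> i * dunkl_op \<mu> i)
      = dunkl_op \<mu> i * ?C + ?C * dunkl_op \<mu> i"
    unfolding commutator_square dunkl_mulx_op_commutator ..
  also have "\<dots> = 2 *\<^sub>R dunkl_op \<mu> i + (2 * \<mu> i) *\<^sub>R (dunkl_op \<mu> i * refl_op i + refl_op i * dunkl_op \<mu> i)"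
    by (simp add: algebra_simps scaleR_2)
  also have "\<dots> = 2 *\<^sub>R dunkl_op \<mu> i"
    by (simp add: refl_dunkl_op_anticommute)
  finally show ?thesis using True by simp
next
  case False
  then show ?thesis
    by (simp add: commutator_square dunkl_mulx_op_commute)
qed

section \<open>An anticommutator identity from commutation relations\<close>

text \<open>
For a partition \<open>A = U\<^sub>1 \<union> U\<^sub>2\<close>, \<open>B = U\<^sub>2 \<union> U\<^sub>3\<close>, the elements stand for \<open>s\<^sub>k = S\<^sub>U\<^sub>k\<close>,
\<open>c\<^sub>k\<^sub>l = x\<^sub>U\<^sub>k D\<^sub>U\<^sub>l + x\<^sub>U\<^sub>l D\<^sub>U\<^sub>k\<close> and \<open>p\<^sub>k = \<Prod>\<^sub>i\<^sub>\<in>\<^sub>U\<^sub>k r\<^sub>i\<close>. The argument order of each commutation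
hypothesis is chosen so that, used as rewrite rules, they sort products into one normal form.
\<close>

locale gamma_triple =
  fixes s1 s2 s3 c12 c23 c13 p1 p2 p3 :: "'a::{real_algebra, monoid_mult}"
  assumes s_commute: "commute s2 s1" "commute s3 s1" "commute s3 s2"
    and c_anticommute_s: "anticommute c12 s2" "anticommute c23 s2"
    and c_commute_s: "commute c12 s3" "commute c23 s1"
    and c_anticommutator: "c12 * c23 + c23 * c12 = - ((2 *\<^sub>R s2 + 1) * c13)"
    and p_commute: "commute p2 p1" "commute p3 p1" "commute p3 p2"
    and p2_square: "p2 * p2 = 1"
    and p_commute_s: "commute p1 s1" "commute p1 s2" "commute p1 s3" "commute p2 s1" "commute p2 s2"
      "commute p2 s3" "commute p3 s1" "commute p3 s2" "commute p3 s3"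
    and p_anticommute_c: "anticommute p1 c12" "anticommute p1 c13" "anticommute p2 c12"
      "anticommute p2 c23" "anticommute p3 c13" "anticommute p3 c23"
    and p_commute_c: "commute p1 c23" "commute p2 c13" "commute p3 c12"
begin

lemma anticommutator_identity:
  defines "h \<equiv> (1/2 :: real) *\<^sub>R (1 :: 'a)"
  shows "((s1 + s2 + h + c12) * (p1 * p2)) * ((s2 + s3 + h + c23) * (p2 * p3))
       + ((s2 + s3 + h + c23) * (p2 * p3)) * ((s1 + s2 + h + c12) * (p1 * p2))
     = (s1 + s3 + h + c13) * (p1 * p3)
       + 2 *\<^sub>R ((s2 * p2) * ((s1 + s2 + h + c12 + s3 + h + (c13 + c23)) * ((p1 * p2) * p3)))
       + 2 *\<^sub>R ((s1 * p1) * (s3 * p3))"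
proof -
  note commute = s_commute c_commute_s p_commute p_commute_s p_commute_c
  note anti = c_anticommute_s p_anticommute_c
  have cc: "c23 * c12 = - (c12 * c23) - (2 *\<^sub>R (s2 * c13) + c13)"
    using c_anticommutator by (simp add: algebra_simps eq_neg_iff_add_eq_0 flip: minus_add_distrib)
  have cc_left: "c23 * (c12 * z) = - (c12 * (c23 * z)) - (2 *\<^sub>R (s2 * c13) + c13) * z" for z
    by (simp add: cc algebra_simps flip: mult.assoc)
  have p2_square_left: "p2 * (p2 * z) = z" for z
    by (simp add: p2_square flip: mult.assoc)
  have double: "a *\<^sub>R x + (a *\<^sub>R x + y) = (a + a) *\<^sub>R x + y" "a *\<^sub>R x + a *\<^sub>R x = (a + a) *\<^sub>R x"
    for a :: real and x y :: 'a
    by (simp_all only: scaleR_add_left add.assoc)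
  show ?thesis
    unfolding h_def
    by (simp add: algebra_simps commute [unfolded commute_def] commute [THEN commute_mult_left]
        anti [unfolded anticommute_def] anti [THEN anticommute_mult_left] cc cc_left p2_square p2_square_left
        scaleR_2 double)
qed

end

section \<open>Clifford sums of Dunkl operators\<close>

locale clifford_dunkl =
  fixes n :: nat and \<mu> :: "nat \<Rightarrow> real" and e :: "nat \<Rightarrow> 'v::real_vector \<Rightarrow> 'v"
  assumes linear_e: "\<forall>i\<in>{1..n}. linear (e i)"
    and clifford: "\<forall>i\<in>{1..n}. \<forall>j\<in>{1..n}. \<forall>v. e i (e j v) + e j (e i v) = (if i = j then -2 else 0) *\<^sub>R v"
begin

abbreviation E :: "nat \<Rightarrow> 'v pv_op" where
  "E i \<equiv> coef_op (e i)"

definition X :: "nat set \<Rightarrow> 'v pv_op" where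
  "X U = (\<Sum>i\<in>U. E i * mulx_op i)"

definition D :: "nat set \<Rightarrow> 'v pv_op" where
  "D U = (\<Sum>i\<in>U. E i * dunkl_op \<mu> i)"

definition S :: "nat set \<Rightarrow> 'v pv_op" where
  "S U = (1/2) *\<^sub>R (X U * D U - D U * X U - 1)"

definition G :: "nat set \<Rightarrow> 'v pv_op" where
  "G U = S U * refl_set_op U"

lemma app_G: "U \<subseteq> {1..n} \<Longrightarrow> app (G U) = Gamma \<mu> e U"
proof -
  assume U: "U \<subseteq> {1..n}"
  then have "finite U" and "\<forall>i\<in>U. linear (e i)"
    using linear_e finite_subset by auto
  then have "app (X U) = XA e U" and "app (D U) = DA \<mu> e U"
    by (auto simp: X_def XA_def D_def DA_def app_sum app_ops app_coef_op fun_eq_iff intro!: sum.cong)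
  then show ?thesis
    by (intro ext) (simp add: G_def S_def Gamma_def SA_def app_ops)
qed

lemma mulx_op_commute_E: "i \<in> {1..n} \<Longrightarrow> commute (mulx_op j) (E i)"
  using linear_e by (simp add: commute_def coef_mulx_op_commute)

lemma dunkl_op_commute_E: "i \<in> {1..n} \<Longrightarrow> commute (dunkl_op \<mu> j) (E i)"
  using linear_e by (simp add: commute_def coef_dunkl_op_commute)

lemma refl_set_op_commute_E: "i \<in> {1..n} \<Longrightarrow> commute (refl_set_op W) (E i)"
  using linear_e by (simp add: commute_def coef_refl_set_op_commute)

lemma E_anticommutator:
  "i \<in> {1..n} \<Longrightarrow> j \<in> {1..n} \<Longrightarrow> E i * E j + E j * E i = (if i = j then -2 else 0) *\<^sub>R 1"
  using linear_e clifford by (intro coef_op_anticommutator) auto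

lemma E_square: "i \<in> {1..n} \<Longrightarrow> E i * E i = - 1"
  using E_anticommutator[of i i] by (simp add: scaleR_2 [symmetric] flip: scaleR_minus_right)

lemma clifford_terms_anticommute:
  assumes "i \<in> {1..n}" "j \<in> {1..n}" "i \<noteq> j"
    and "commute a (E j)" "commute b (E i)" "commute a b"
  shows "anticommute (E i * a) (E j * b)"
proof -
  have "E i * a * (E j * b) = (E i * E j) * (a * b)"
    by (simp add: commute_mult_left[OF assms(4)] mult.assoc)
  also have "\<dots> = - ((E j * E i) * (b * a))"
  proof -
    have "E i * E j = - (E j * E i)"
      using E_anticommutator[OF assms(1,2)] assms(3) by (simp add: eq_neg_iff_add_eq_0)
    then show ?thesis using assms(6) by (simp add: commute_def)
  qed
  also have "\<dots> = - (E j * b * (E i * a))"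
    by (simp add: commute_mult_left[OF assms(5)] mult.assoc)
  finally show ?thesis by (simp add: anticommute_def)
qed

lemma clifford_sums_anticommute:
  assumes "U \<subseteq> {1..n}" "V \<subseteq> {1..n}" "U \<inter> V = {}"
    and "\<And>i j. i \<in> U \<Longrightarrow> j \<in> V \<Longrightarrow> commute (a i) (E j) \<and> commute (b j) (E i) \<and> commute (a i) (b j)"
  shows "anticommute (\<Sum>i\<in>U. E i * a i) (\<Sum>j\<in>V. E j * b j)"
  by (rule anticommute_sum_sum, rule clifford_terms_anticommute) (use assms in auto)

lemma X_X_anticommute: "U \<subseteq> {1..n} \<Longrightarrow> V \<subseteq> {1..n} \<Longrightarrow> U \<inter> V = {} \<Longrightarrow> anticommute (X U) (X V)"
  unfolding X_def
  by (intro clifford_sums_anticommute conjI mulx_op_commute_E) (auto simp: commute_def mulx_op_commute)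

lemma X_D_anticommute: "U \<subseteq> {1..n} \<Longrightarrow> V \<subseteq> {1..n} \<Longrightarrow> U \<inter> V = {} \<Longrightarrow> anticommute (X U) (D V)"
  unfolding X_def D_def
  by (intro clifford_sums_anticommute conjI mulx_op_commute_E dunkl_op_commute_E)
     (auto simp: commute_def intro!: dunkl_mulx_op_commute [symmetric])

lemma D_D_anticommute: "U \<subseteq> {1..n} \<Longrightarrow> V \<subseteq> {1..n} \<Longrightarrow> U \<inter> V = {} \<Longrightarrow> anticommute (D U) (D V)"
  unfolding D_def
  by (intro clifford_sums_anticommute conjI dunkl_op_commute_E) (auto simp: commute_def dunkl_op_commute)

lemma clifford_sum_square:
  assumes "U \<subseteq> {1..n}"
    and "\<And>i j. i \<in> U \<Longrightarrow> j \<in> U \<Longrightarrow> commute (a i) (E j) \<and> commute (a i) (a j)"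
  shows "(\<Sum>i\<in>U. E i * a i) * (\<Sum>i\<in>U. E i * a i) = - (\<Sum>i\<in>U. a i * a i)"
proof -
  have "finite U" using assms(1) finite_subset by blast
  then show ?thesis using assms
  proof (induction U rule: finite_induct)
    case (insert k U)
    let ?A = "\<Sum>i\<in>U. E i * a i"
    have k: "k \<in> {1..n}" using insert.prems by auto
    have "anticommute (\<Sum>i\<in>{k}. E i * a i) ?A"
      using insert.hyps insert.prems by (intro clifford_sums_anticommute) auto
    then have cross: "E k * a k * ?A + ?A * (E k * a k) = 0"
      by (simp add: anticommute_def)
    have ak: "commute (a k) (E k)" using insert.prems by simp
    have "E k * a k * (E k * a k) = E k * E k * (a k * a k)"
      by (simp add: commute_mult_left [OF ak] mult.assoc)
    also have "\<dots> = - (a k * a k)"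
      using k by (simp add: E_square)
    finally have "E k * a k * (E k * a k) = - (a k * a k)" .
    with cross insert show ?case
      by (simp add: algebra_simps)
  qed simp
qed

lemma square_sum_clifford_sum_commutator:
  assumes "U \<subseteq> {1..n}"
    and "\<And>i j. i \<in> U \<Longrightarrow> j \<in> U \<Longrightarrow> commute (a i) (E j)"
    and "\<And>i j. a i * a i * b j - b j * (a i * a i) = (if i = j then c *\<^sub>R d j else 0)"
  shows "(\<Sum>i\<in>U. a i * a i) * (\<Sum>j\<in>U. E j * b j) - (\<Sum>j\<in>U. E j * b j) * (\<Sum>i\<in>U. a i * a i)
    = c *\<^sub>R (\<Sum>j\<in>U. E j * d j)"
proof -
  define Q where "Q = (\<Sum>i\<in>U. a i * a i)"
  have U: "finite U" using assms(1) finite_subset by blast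
  have QE: "commute Q (E j)" if "j \<in> U" for j
    unfolding Q_def
    by (intro commute_sym [OF commute_sum] commute_mult) (use that assms(2) commute_sym in blast)+
  have "Q * (\<Sum>j\<in>U. E j * b j) - (\<Sum>j\<in>U. E j * b j) * Q = (\<Sum>j\<in>U. E j * (Q * b j - b j * Q))"
    unfolding sum_distrib_left sum_distrib_right sum_subtractf [symmetric]
    by (intro sum.cong refl) (simp add: commute_mult_left [OF QE] right_diff_distrib mult.assoc)
  also have "\<dots> = (\<Sum>j\<in>U. E j * (c *\<^sub>R d j))"
    unfolding Q_def sum_distrib_right sum_distrib_left sum_subtractf [symmetric] assms(3) using U
    by (intro sum.cong refl) (simp add: if_distrib sum.delta cong: if_cong)
  finally show ?thesis
    by (simp add: Q_def scaleR_sum_right)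
qed

lemma X_square_D_commutator:
  assumes "U \<subseteq> {1..n}"
  shows "X U * X U * D U - D U * (X U * X U) = 2 *\<^sub>R X U"
proof -
  have "X U * X U = - (\<Sum>i\<in>U. mulx_op i * mulx_op i)"
    unfolding X_def using assms
    by (intro clifford_sum_square conjI mulx_op_commute_E) (auto simp: commute_def mulx_op_commute)
  moreover have "(\<Sum>i\<in>U. mulx_op i * mulx_op i) * D U - D U * (\<Sum>i\<in>U. mulx_op i * mulx_op i) = (-2) *\<^sub>R X U"
    unfolding X_def D_def using assms
    by (intro square_sum_clifford_sum_commutator mulx_op_commute_E mulx_square_dunkl_op_commutator) auto
  ultimately show ?thesis
    by (simp add: algebra_simps)
qed

lemma D_square_X_commutator:
  assumes "U \<subseteq> {1..n}"
  shows "X U * (D U * D U) - D U * D U * X U = 2 *\<^sub>R D U"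
proof -
  have "D U * D U = - (\<Sum>i\<in>U. dunkl_op \<mu> i * dunkl_op \<mu> i)"
    unfolding D_def using assms
    by (intro clifford_sum_square conjI dunkl_op_commute_E) (auto simp: commute_def dunkl_op_commute)
  moreover have "(\<Sum>i\<in>U. dunkl_op \<mu> i * dunkl_op \<mu> i) * X U - X U * (\<Sum>i\<in>U. dunkl_op \<mu> i * dunkl_op \<mu> i)
      = 2 *\<^sub>R D U"
    unfolding X_def D_def using assms
    by (intro square_sum_clifford_sum_commutator dunkl_op_commute_E dunkl_square_mulx_op_commutator) auto
  ultimately show ?thesis
    by (simp add: algebra_simps)
qed

lemma S_anticommute_X: "U \<subseteq> {1..n} \<Longrightarrow> anticommute (S U) (X U)"
  using X_square_D_commutator [of U] by (simp add: anticommute_def S_def algebra_simps scaleR_2)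

lemma S_anticommute_D: "U \<subseteq> {1..n} \<Longrightarrow> anticommute (S U) (D U)"
  using D_square_X_commutator [of U] by (simp add: anticommute_def S_def algebra_simps scaleR_2)

lemma commute_S_if_anticommute: "anticommute a (X U) \<Longrightarrow> anticommute a (D U) \<Longrightarrow> commute a (S U)"
  unfolding S_def by (intro commute_scaleR commute_diff commute_one anticommute_mult_anticommute)

lemma commute_S_if_commute: "commute a (X U) \<Longrightarrow> commute a (D U) \<Longrightarrow> commute a (S U)"
  unfolding S_def by (intro commute_scaleR commute_diff commute_one commute_mult)

lemma refl_set_anticommute_X: "finite W \<Longrightarrow> U \<subseteq> {1..n} \<Longrightarrow> U \<subseteq> W \<Longrightarrow> anticommute (refl_set_op W) (X U)"
  unfolding X_def
  by (intro anticommute_sum commute_mult_anticommute refl_set_op_commute_E refl_set_mulx_op_anticommute) auto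

lemma refl_set_anticommute_D: "finite W \<Longrightarrow> U \<subseteq> {1..n} \<Longrightarrow> U \<subseteq> W \<Longrightarrow> anticommute (refl_set_op W) (D U)"
  unfolding D_def
  by (intro anticommute_sum commute_mult_anticommute refl_set_op_commute_E refl_set_dunkl_op_anticommute) auto

lemma refl_set_commute_X: "U \<subseteq> {1..n} \<Longrightarrow> U \<inter> W = {} \<Longrightarrow> commute (refl_set_op W) (X U)"
  unfolding X_def
  by (intro commute_sum commute_mult refl_set_op_commute_E) (auto simp: commute_def intro!: refl_set_mulx_op_commute)

lemma refl_set_commute_D: "U \<subseteq> {1..n} \<Longrightarrow> U \<inter> W = {} \<Longrightarrow> commute (refl_set_op W) (D U)"
  unfolding D_def
  by (intro commute_sum commute_mult refl_set_op_commute_E) (auto simp: commute_def intro!: refl_set_dunkl_op_commute)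

lemma refl_set_commute_S:
  "finite W \<Longrightarrow> U \<subseteq> {1..n} \<Longrightarrow> U \<subseteq> W \<or> U \<inter> W = {} \<Longrightarrow> commute (refl_set_op W) (S U)"
  by (metis commute_S_if_anticommute commute_S_if_commute refl_set_anticommute_X refl_set_anticommute_D
      refl_set_commute_X refl_set_commute_D)

lemma X_commute_S: "U \<subseteq> {1..n} \<Longrightarrow> V \<subseteq> {1..n} \<Longrightarrow> U \<inter> V = {} \<Longrightarrow> commute (X V) (S U)"
  by (intro commute_S_if_anticommute X_X_anticommute X_D_anticommute) auto

lemma D_commute_S: "U \<subseteq> {1..n} \<Longrightarrow> V \<subseteq> {1..n} \<Longrightarrow> U \<inter> V = {} \<Longrightarrow> commute (D V) (S U)"
  by (intro commute_S_if_anticommute anticommute_sym [OF X_D_anticommute] D_D_anticommute) auto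

lemma S_commute_S: "U \<subseteq> {1..n} \<Longrightarrow> V \<subseteq> {1..n} \<Longrightarrow> U \<inter> V = {} \<Longrightarrow> commute (S V) (S U)"
  by (intro commute_sym [of "S U"] commute_S_if_commute commute_sym [OF X_commute_S] commute_sym [OF D_commute_S])

definition S_cross :: "nat set \<Rightarrow> nat set \<Rightarrow> 'v pv_op" where
  "S_cross U V = X U * D V + X V * D U"

lemma S_cross_sym: "S_cross U V = S_cross V U"
  by (simp add: S_cross_def add.commute)

lemma X_union: "U \<subseteq> {1..n} \<Longrightarrow> V \<subseteq> {1..n} \<Longrightarrow> U \<inter> V = {} \<Longrightarrow> X (U \<union> V) = X U + X V"
  unfolding X_def by (rule sum.union_disjoint) (auto intro: finite_subset)

lemma D_union: "U \<subseteq> {1..n} \<Longrightarrow> V \<subseteq> {1..n} \<Longrightarrow> U \<inter> V = {} \<Longrightarrow> D (U \<union> V) = D U + D V"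
  unfolding D_def by (rule sum.union_disjoint) (auto intro: finite_subset)

lemma S_union:
  assumes "U \<subseteq> {1..n}" "V \<subseteq> {1..n}" "U \<inter> V = {}"
  shows "S (U \<union> V) = S U + S V + (1/2) *\<^sub>R 1 + S_cross U V"
proof -
  have "D V * X U = - (X U * D V)" and "D U * X V = - (X V * D U)"
    using X_D_anticommute [OF assms] X_D_anticommute [OF assms(2,1)] assms(3)
    by (auto simp: anticommute_def Int_commute)
  then show ?thesis
    unfolding S_def S_cross_def X_union [OF assms] D_union [OF assms]
    by (simp add: algebra_simps flip: scaleR_add_left)
qed

lemma S_cross_union_left:
  "U \<subseteq> {1..n} \<Longrightarrow> V \<subseteq> {1..n} \<Longrightarrow> U \<inter> V = {} \<Longrightarrow> S_cross (U \<union> V) W = S_cross U W + S_cross V W"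
  by (simp add: S_cross_def X_union D_union algebra_simps)

lemma refl_set_anticommute_S_cross:
  "U \<subseteq> {1..n} \<Longrightarrow> V \<subseteq> {1..n} \<Longrightarrow> U \<inter> V = {} \<Longrightarrow> anticommute (refl_set_op U) (S_cross U V)"
  unfolding S_cross_def
  by (intro anticommute_add anticommute_mult_commute commute_mult_anticommute
      refl_set_anticommute_X refl_set_anticommute_D refl_set_commute_X refl_set_commute_D)
     (auto intro: finite_subset)

lemma refl_set_commute_S_cross:
  "U \<subseteq> {1..n} \<Longrightarrow> V \<subseteq> {1..n} \<Longrightarrow> U \<inter> W = {} \<Longrightarrow> V \<inter> W = {} \<Longrightarrow>
   commute (refl_set_op W) (S_cross U V)"
  unfolding S_cross_def by (intro commute_add commute_mult refl_set_commute_X refl_set_commute_D)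

lemma S_anticommute_S_cross:
  "U \<subseteq> {1..n} \<Longrightarrow> V \<subseteq> {1..n} \<Longrightarrow> U \<inter> V = {} \<Longrightarrow> anticommute (S U) (S_cross U V)"
  unfolding S_cross_def
  by (intro anticommute_add anticommute_mult_commute commute_mult_anticommute S_anticommute_X S_anticommute_D
      commute_sym [OF X_commute_S] commute_sym [OF D_commute_S]) auto

lemma S_commute_S_cross:
  "U \<subseteq> {1..n} \<Longrightarrow> V \<subseteq> {1..n} \<Longrightarrow> W \<subseteq> {1..n} \<Longrightarrow> U \<inter> W = {} \<Longrightarrow> V \<inter> W = {} \<Longrightarrow>
   commute (S W) (S_cross U V)"
  unfolding S_cross_def
  by (intro commute_add commute_mult commute_sym [OF X_commute_S] commute_sym [OF D_commute_S])
     (auto simp: Int_commute)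

lemma S_cross_anticommutator:
  assumes "U1 \<subseteq> {1..n}" "U2 \<subseteq> {1..n}" "U3 \<subseteq> {1..n}"
    and "U1 \<inter> U2 = {}" "U1 \<inter> U3 = {}" "U2 \<inter> U3 = {}"
  shows "S_cross U1 U2 * S_cross U2 U3 + S_cross U2 U3 * S_cross U1 U2 = - ((2 *\<^sub>R S U2 + 1) * S_cross U1 U3)"
proof -
  have "anticommute (X U2) (X U1)" "anticommute (X U2) (D U1)" "anticommute (D U2) (X U1)"
    "anticommute (D U2) (D U1)" "anticommute (X U3) (X U1)" "anticommute (X U3) (D U1)"
    "anticommute (D U3) (X U1)" "anticommute (D U3) (D U1)" "anticommute (X U3) (X U2)"
    "anticommute (X U3) (D U2)" "anticommute (D U3) (X U2)" "anticommute (D U3) (D U2)"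
    using assms by (auto intro!: X_X_anticommute X_D_anticommute D_D_anticommute anticommute_sym [OF X_D_anticommute])
  note anti = this [unfolded anticommute_def] this [THEN anticommute_mult_left]
  have S2: "2 *\<^sub>R S U2 + 1 = X U2 * D U2 - D U2 * X U2"
    by (simp add: S_def scaleR_diff_right)
  show ?thesis
    unfolding S_cross_def S2 by (simp add: algebra_simps anti)
qed

lemma G_union:
  assumes "U \<subseteq> {1..n}" "V \<subseteq> {1..n}" "U \<inter> V = {}"
  shows "G (U \<union> V) = (S U + S V + (1/2) *\<^sub>R 1 + S_cross U V) * (refl_set_op U * refl_set_op V)"
  using assms by (simp add: G_def S_union refl_set_op_union finite_subset)

lemma gamma_triple_partition:
  assumes "U1 \<subseteq> {1..n}" "U2 \<subseteq> {1..n}" "U3 \<subseteq> {1..n}"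
    and "U1 \<inter> U2 = {}" "U1 \<inter> U3 = {}" "U2 \<inter> U3 = {}"
  shows "gamma_triple (S U1) (S U2) (S U3) (S_cross U1 U2) (S_cross U2 U3) (S_cross U1 U3)
    (refl_set_op U1) (refl_set_op U2) (refl_set_op U3)"
proof -
  have U: "finite U1" "finite U2" "finite U3" "U2 \<inter> U1 = {}" "U3 \<inter> U1 = {}" "U3 \<inter> U2 = {}"
    using assms by (auto intro: finite_subset)
  show ?thesis
  proof
    show "commute (S U2) (S U1)" "commute (S U3) (S U1)" "commute (S U3) (S U2)"
      by (intro S_commute_S assms)+
    show "anticommute (S_cross U1 U2) (S U2)" "anticommute (S_cross U2 U3) (S U2)"
      using assms S_anticommute_S_cross [of U2 U1] S_anticommute_S_cross [of U2 U3]
      by (auto simp: S_cross_sym Int_commute intro: anticommute_sym)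
    show "commute (S_cross U1 U2) (S U3)" "commute (S_cross U2 U3) (S U1)"
      using assms U by (auto intro!: commute_sym [OF S_commute_S_cross])
    show "S_cross U1 U2 * S_cross U2 U3 + S_cross U2 U3 * S_cross U1 U2 = - ((2 *\<^sub>R S U2 + 1) * S_cross U1 U3)"
      using assms by (rule S_cross_anticommutator)
    show "commute (refl_set_op U2) (refl_set_op U1)" "commute (refl_set_op U3) (refl_set_op U1)"
      "commute (refl_set_op U3) (refl_set_op U2)"
      by (simp_all add: commute_def refl_set_op_commute)
    show "refl_set_op U2 * refl_set_op U2 = 1"
      by (rule refl_set_op_square)
    show "commute (refl_set_op U1) (S U1)" "commute (refl_set_op U1) (S U2)" "commute (refl_set_op U1) (S U3)"
      "commute (refl_set_op U2) (S U1)" "commute (refl_set_op U2) (S U2)" "commute (refl_set_op U2) (S U3)"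
      "commute (refl_set_op U3) (S U1)" "commute (refl_set_op U3) (S U2)" "commute (refl_set_op U3) (S U3)"
      using refl_set_commute_S assms U by blast+
    show "anticommute (refl_set_op U1) (S_cross U1 U2)" "anticommute (refl_set_op U1) (S_cross U1 U3)"
      "anticommute (refl_set_op U2) (S_cross U1 U2)" "anticommute (refl_set_op U2) (S_cross U2 U3)"
      "anticommute (refl_set_op U3) (S_cross U1 U3)" "anticommute (refl_set_op U3) (S_cross U2 U3)"
      using refl_set_anticommute_S_cross [OF assms(1,2,4)] refl_set_anticommute_S_cross [OF assms(1,3,5)]
        refl_set_anticommute_S_cross [OF assms(2,1) U(4)] refl_set_anticommute_S_cross [OF assms(2,3,6)]
        refl_set_anticommute_S_cross [OF assms(3,1) U(5)] refl_set_anticommute_S_cross [OF assms(3,2) U(6)]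
      by (simp_all add: S_cross_sym)
    show "commute (refl_set_op U1) (S_cross U2 U3)" "commute (refl_set_op U2) (S_cross U1 U3)"
      "commute (refl_set_op U3) (S_cross U1 U2)"
      by (intro refl_set_commute_S_cross assms U)+
  qed
qed

lemma G_anticommutator:
  assumes "A \<subseteq> {1..n}" and "B \<subseteq> {1..n}"
  shows "G A * G B + G B * G A = G ((A \<union> B) - (A \<inter> B)) + 2 *\<^sub>R (G (A \<inter> B) * G (A \<union> B))
           + 2 *\<^sub>R (G (A - (A \<inter> B)) * G (B - (A \<inter> B)))"
proof -
  define U1 U2 U3 where "U1 = A - B" and "U2 = A \<inter> B" and "U3 = B - A"
  have U: "U1 \<subseteq> {1..n}" "U2 \<subseteq> {1..n}" "U3 \<subseteq> {1..n}" "U1 \<union> U2 \<subseteq> {1..n}"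
    using assms by (auto simp: U1_def U2_def U3_def)
  have disjoint: "U1 \<inter> U2 = {}" "U1 \<inter> U3 = {}" "U2 \<inter> U3 = {}" "(U1 \<union> U2) \<inter> U3 = {}"
    by (auto simp: U1_def U2_def U3_def)
  have "A = U1 \<union> U2" "B = U2 \<union> U3" "(A \<union> B) - (A \<inter> B) = U1 \<union> U3" "A \<union> B = (U1 \<union> U2) \<union> U3"
    "A \<inter> B = U2" "A - (A \<inter> B) = U1" "B - (A \<inter> B) = U3"
    by (auto simp: U1_def U2_def U3_def)
  moreover have "G ((U1 \<union> U2) \<union> U3) = (S U1 + S U2 + (1/2) *\<^sub>R 1 + S_cross U1 U2 + S U3 + (1/2) *\<^sub>R 1
      + (S_cross U1 U3 + S_cross U2 U3)) * ((refl_set_op U1 * refl_set_op U2) * refl_set_op U3)"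
    using U disjoint by (simp add: G_union S_union S_cross_union_left refl_set_op_union finite_subset)
  moreover note G_union [OF U(1,2) disjoint(1)] G_union [OF U(2,3) disjoint(3)] G_union [OF U(1,3) disjoint(2)]
  ultimately show ?thesis
    by (simp only: G_def [of U1] G_def [of U2] G_def [of U3]
        gamma_triple.anticommutator_identity [OF gamma_triple_partition [OF U(1-3) disjoint(1-3)]])
qed

end

theorem proposition4:
  fixes n :: nat and \<mu> :: "nat \<Rightarrow> real" and e :: "nat \<Rightarrow> 'v::real_vector \<Rightarrow> 'v"
    and A B :: "nat set" and F :: "'v pv"
  assumes "n \<ge> 1"
    and "\<forall>i\<in>{1..n}. \<mu> i > 0"
    and "\<forall>i\<in>{1..n}. linear (e i)"
    and "\<forall>i\<in>{1..n}. \<forall>j\<in>{1..n}. \<forall>v. e i (e j v) + e j (e i v) = (if i = j then -2 else 0) *\<^sub>R v"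
    and "A \<subseteq> {1..n}" and "B \<subseteq> {1..n}"
    and "is_poly n F"
  shows "(\<lambda>\<alpha>. Gamma \<mu> e A (Gamma \<mu> e B F) \<alpha> + Gamma \<mu> e B (Gamma \<mu> e A F) \<alpha>) =
         (\<lambda>\<alpha>. Gamma \<mu> e ((A \<union> B) - (A \<inter> B)) F \<alpha>
              + 2 *\<^sub>R Gamma \<mu> e (A \<inter> B) (Gamma \<mu> e (A \<union> B) F) \<alpha>
              + 2 *\<^sub>R Gamma \<mu> e (A - (A \<inter> B)) (Gamma \<mu> e (B - (A \<inter> B)) F) \<alpha>)"
proof -
  \<comment> \<open>The identity holds on all coefficient functions and for all real \<open>\<mu>\<close>.\<close>
  interpret clifford_dunkl n \<mu> e
    using assms(3,4) by unfold_locales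
  have "A \<union> B - A \<inter> B \<subseteq> {1..n}" "A \<inter> B \<subseteq> {1..n}" "A \<union> B \<subseteq> {1..n}"
    "A - A \<inter> B \<subseteq> {1..n}" "B - A \<inter> B \<subseteq> {1..n}"
    using assms(5,6) by auto
  note app_G_parts = app_G [OF assms(5)] app_G [OF assms(6)] app_G [OF this(1)] app_G [OF this(2)]
    app_G [OF this(3)] app_G [OF this(4)] app_G [OF this(5)]
  have "app (G A * G B + G B * G A) F = app (G ((A \<union> B) - (A \<inter> B)) + 2 *\<^sub>R (G (A \<inter> B) * G (A \<union> B))
           + 2 *\<^sub>R (G (A - (A \<inter> B)) * G (B - (A \<inter> B)))) F"
    by (simp only: G_anticommutator assms(5,6))
  then show ?thesis
    by (simp add: app_simps app_G_parts)
qed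

end
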